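(* Let $p>q>1$ be relatively prime integers. Then for all integers $k,l\ge 1$ we have $\mu_{(\frac{p}{q},kq)}=\mu_{(\frac{p}{q},lq)}$.
   Context: For a real number $\gamma>1$ let $T_\gamma:[0,1)\to[0,1)$, $T_\gamma(x)=\gamma x \bmod 1$. For real $\beta>1$ and an integer $n\ge 2$, the alternate base transformation $K_{(\beta,n)}:\{0,1\}\times[0,1)\to\{0,1\}\times[0,1)$ is $K_{(\beta,n)}(0,x)=(1,T_\beta(x))$, $K_{(\beta,n)}(1,x)=(0,T_n(x))$. For reals $\gamma_1,\gamma_2>1$, $T_{\gamma_1\circ\gamma_2}:=T_{\gamma_1}\circ T_{\gamma_2}$ (a piecewise linear map of constant slope $\gamma_1\gamma_2$), and $\mu_{\gamma_1\circ\gamma_2}$ denotes its unique invariant probability measure absolutely continuous with respect to Lebesgue measure. The absolutely continuous invariant probability measure $\mu_{(\beta,n)}$ of $K_{(\beta,n)}$ is given by $\mu_{(\beta,n)}(\{0\}\times A\cup\{1\}\times B)=\tfrac12\mu_{n\circ\beta}(A)+\tfrac12\mu_{\beta\circ n}(B)$ for Borel $A,B\subseteq[0,1)$. *)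

theory Defs
  imports "HOL-Probability.Probability"
begin

definition Tmap :: "real \<Rightarrow> real \<Rightarrow> real" where
  "Tmap \<gamma> x = frac (\<gamma> * x)"

definition unit_leb :: "real measure" where
  "unit_leb = restrict_space lborel {0..<1}"

definition is_acip :: "(real \<Rightarrow> real) \<Rightarrow> real measure \<Rightarrow> bool" where
  "is_acip T \<mu> \<longleftrightarrow> sets \<mu> = sets unit_leb \<and> prob_space \<mu> \<and>
     absolutely_continuous unit_leb \<mu> \<and> T \<in> measurable \<mu> \<mu> \<and> distr \<mu> \<mu> T = \<mu>"

definition acip :: "(real \<Rightarrow> real) \<Rightarrow> real measure" where
  "acip T = (THE \<mu>. is_acip T \<mu>)"

definition mu_comp :: "real \<Rightarrow> real \<Rightarrow> real measure" where
  "mu_comp \<gamma>1 \<gamma>2 = acip (Tmap \<gamma>1 \<circ> Tmap \<gamma>2)"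

text \<open>The acip mu_{(beta,n)} of the alternate base transformation K_{(beta,n)} on
  {0,1} x [0,1):  mu({0} x A u {1} x B) = 1/2 mu_{n o beta}(A) + 1/2 mu_{beta o n}(B).\<close>
definition mu_alt :: "real \<Rightarrow> int \<Rightarrow> (nat \<times> real) measure" where
  "mu_alt \<beta> n = measure_of ({0,1::nat} \<times> {0..<1})
     (sets (count_space {0,1::nat} \<Otimes>\<^sub>M unit_leb))
     (\<lambda>S. ennreal (1/2) * emeasure (mu_comp (real_of_int n) \<beta>) {x. (0, x) \<in> S}
        + ennreal (1/2) * emeasure (mu_comp \<beta> (real_of_int n)) {x. (1, x) \<in> S})"

end

theory Submission
  imports Defs
begin

(* Since kq is an integer, T_kq o T_(p/q) = T_kp. Lebesgue measure lambda is the only acip of an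
   integer map T_N, N >= 2: it is invariant, and if mu = h lambda is invariant then
   mu(B) = integral of h * 1_B o T_N^n for every n, while the mixing of T_N forces the liminf of
   the right-hand side to be at least lambda(B); so mu >= lambda, hence mu = lambda.
   Pushing forward by T_kq, resp. T_(p/q), maps acips of T_(p/q) o T_kq to acips of T_kp and back,
   so the acip of T_(p/q) o T_kq is the image of lambda under T_(p/q). Neither measure
   depends on k. *)

lemma space_unit_leb [simp]: "space unit_leb = {0..<1}"
  by (simp add: unit_leb_def space_restrict_space)

lemma sets_unit_leb_iff: "A \<in> sets unit_leb \<longleftrightarrow> A \<in> sets borel \<and> A \<subseteq> {0..<1}"
  unfolding unit_leb_def by (subst sets_restrict_space_iff) auto

lemma emeasure_unit_leb: "A \<in> sets unit_leb \<Longrightarrow> emeasure unit_leb A = emeasure lborel A"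
  unfolding unit_leb_def by (subst emeasure_restrict_space) (auto simp: sets_restrict_space_iff)

lemma measure_unit_leb: "A \<in> sets unit_leb \<Longrightarrow> measure unit_leb A = measure lborel A"
  by (simp add: measure_def emeasure_unit_leb)

interpretation unit_leb: prob_space unit_leb
  by (rule prob_spaceI) (simp add: emeasure_unit_leb sets_unit_leb_iff)

lemma Tmap_borel [measurable]: "Tmap c \<in> borel_measurable borel"
  unfolding Tmap_def frac_def by measurable

lemma measurable_Tmap [measurable]: "Tmap c \<in> unit_leb \<rightarrow>\<^sub>M unit_leb"
  unfolding unit_leb_def
  by (intro measurable_restrict_space1 measurable_restrict_space2) (auto simp: Tmap_def frac_lt_1)

lemma frac_of_int_mult_frac: "frac (of_int m * frac x) = frac (of_int m * x :: real)"
proof -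
  have "of_int m * frac x = of_int m * x + of_int (- m * \<lfloor>x\<rfloor>)"
    by (simp add: frac_def algebra_simps)
  then show ?thesis by (metis frac_add_of_int_right)
qed

lemma Tmap_of_int_comp: "Tmap (of_int m) \<circ> Tmap c = Tmap (of_int m * c)"
  by (rule ext) (simp add: Tmap_def frac_of_int_mult_frac mult.assoc)

lemma emeasure_lborel_affine_preimage:
  fixes c t :: real
  assumes "c \<noteq> 0" and [measurable]: "B \<in> sets borel"
  shows "emeasure lborel B = ennreal \<bar>c\<bar> * emeasure lborel {x. t + c * x \<in> B}"
proof -
  have "emeasure lborel B = \<bar>c\<bar> * (\<integral>\<^sup>+x. indicator B (t + c * x) \<partial>lborel)"
    using nn_integral_real_affine[of "indicator B" c t] assms by simp
  also have "(\<lambda>x. indicator B (t + c * x) :: ennreal) = indicator {x. t + c * x \<in> B}"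
    by (auto simp: indicator_def)
  finally show ?thesis by simp
qed

definition nonsingular :: "(real \<Rightarrow> real) \<Rightarrow> bool" where
  "nonsingular R \<longleftrightarrow> (\<forall>A \<in> null_sets unit_leb. R -` A \<inter> {0..<1} \<in> null_sets unit_leb)"

lemma nonsingular_Tmap:
  assumes c: "c \<noteq> 0"
  shows "nonsingular (Tmap c)"
  unfolding nonsingular_def
proof
  fix A assume A: "A \<in> null_sets unit_leb"
  then have [measurable]: "A \<in> sets borel" and "emeasure lborel A = 0"
    by (auto simp: sets_unit_leb_iff emeasure_unit_leb null_sets_def)
  then have "{x. - of_int j + c * x \<in> A} \<in> null_sets lborel" for j
    using emeasure_lborel_affine_preimage[OF c, of A "- of_int j"] c by (simp add: null_sets_def)
  then have U: "(\<Union>j. {x. - of_int j + c * x \<in> A}) \<in> null_sets lborel"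
    by (intro null_sets_UN') auto
  have sub: "Tmap c -` A \<inter> {0..<1} \<subseteq> (\<Union>j. {x. - of_int j + c * x \<in> A})"
    by (auto simp: Tmap_def frac_def)
  have preimage: "Tmap c -` A \<inter> {0..<1} \<in> sets unit_leb"
    using measurable_sets[OF measurable_Tmap] A by auto
  then have "Tmap c -` A \<inter> {0..<1} \<in> null_sets lborel"
    by (intro null_sets_subset[OF U _ sub]) (simp add: sets_unit_leb_iff)
  with preimage show "Tmap c -` A \<inter> {0..<1} \<in> null_sets unit_leb"
    by (simp add: null_sets_def emeasure_unit_leb)
qed

lemma sets_unit_leb_Int_Tmap_preimage:
  assumes "A \<in> sets unit_leb" and "B \<in> sets unit_leb"
  shows "A \<inter> Tmap c -` B \<in> sets unit_leb"
proof -
  have "A \<inter> Tmap c -` B = A \<inter> (Tmap c -` B \<inter> space unit_leb)"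
    using sets.sets_into_space[OF assms(1)] by auto
  then show ?thesis
    using assms measurable_sets[OF measurable_Tmap] by simp
qed

lemma measure_Tmap_preimage_cell:
  fixes M j :: nat
  assumes "j < M" and B: "B \<in> sets unit_leb"
  shows "measure unit_leb ({j / M..<(j + 1) / M} \<inter> Tmap M -` B) = measure unit_leb B / M"
proof -
  have [measurable]: "B \<in> sets borel" and B01: "B \<subseteq> {0..<1}"
    using B by (auto simp: sets_unit_leb_iff)
  have cell: "{j / M..<(j + 1) / M} \<inter> Tmap M -` B = {x. - real j + real M * x \<in> B}"
  proof (intro set_eqI iffI)
    fix x assume "x \<in> {j / M..<(j + 1) / M} \<inter> Tmap M -` B"
    then have "0 \<le> - real j + M * x" "- real j + M * x < 1" "frac (M * x) \<in> B"
      using assms by (auto simp: Tmap_def field_simps)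
    then show "x \<in> {x. - real j + real M * x \<in> B}"
      by (metis frac_add_of_int_left frac_eq mem_Collect_eq of_int_minus of_int_of_nat_eq)
  next
    fix x assume x: "x \<in> {x. - real j + real M * x \<in> B}"
    then have lo: "0 \<le> - real j + M * x" and hi: "- real j + M * x < 1"
      using B01 by auto
    then have "frac (M * x) = - real j + M * x"
      by (metis frac_add_of_int_left frac_eq of_int_minus of_int_of_nat_eq)
    then have "frac (M * x) \<in> B" using x by simp
    moreover have "j / M \<le> x" "x < (j + 1) / M"
      using lo hi assms by (auto simp: field_simps)
    ultimately show "x \<in> {j / M..<(j + 1) / M} \<inter> Tmap M -` B"
      by (simp add: Tmap_def)
  qed
  have "emeasure lborel B = ennreal M * emeasure lborel {x. - real j + real M * x \<in> B}"
    using assms by (subst emeasure_lborel_affine_preimage[where c = M and t = "- real j"]) auto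
  moreover have "{j / M..<(j + 1) / M} \<inter> Tmap M -` B \<in> sets unit_leb"
    using assms by (intro sets_unit_leb_Int_Tmap_preimage)
      (auto simp: sets_unit_leb_iff field_simps)
  ultimately have "emeasure unit_leb B
      = ennreal M * emeasure unit_leb ({j / M..<(j + 1) / M} \<inter> Tmap M -` B)"
    using B unfolding cell by (simp add: emeasure_unit_leb)
  then show ?thesis
    using assms by (simp add: unit_leb.emeasure_eq_measure field_simps flip: ennreal_mult'')
qed

lemma measure_Tmap_preimage_initial:
  fixes M k :: nat
  assumes M: "0 < M" and "k \<le> M" and B: "B \<in> sets unit_leb"
  shows "measure unit_leb ({0..<k / M} \<inter> Tmap M -` B) = k * measure unit_leb B / M"
  using \<open>k \<le> M\<close>
proof (induction k)
  case (Suc k)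
  have "{0..<Suc k / M} = {0..<k / M} \<union> {k / M..<Suc k / M}"
    using M by (intro ivl_disj_un_two(3)[symmetric]) (auto simp: divide_right_mono)
  then have "measure unit_leb ({0..<Suc k / M} \<inter> Tmap M -` B)
      = measure unit_leb (({0..<k / M} \<inter> Tmap M -` B) \<union> ({k / M..<Suc k / M} \<inter> Tmap M -` B))"
    by (simp add: Int_Un_distrib2)
  also have "\<dots> = measure unit_leb ({0..<k / M} \<inter> Tmap M -` B)
      + measure unit_leb ({k / M..<Suc k / M} \<inter> Tmap M -` B)"
    using Suc.prems B by (intro unit_leb.finite_measure_Union sets_unit_leb_Int_Tmap_preimage)
      (auto simp: sets_unit_leb_iff)
  also have "\<dots> = Suc k * measure unit_leb B / M"
    using Suc B measure_Tmap_preimage_cell[of k M B] by (simp add: add_divide_distrib distrib_right)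
  finally show ?case .
qed simp

lemma distr_Tmap_unit_leb:
  fixes M :: nat
  assumes "0 < M"
  shows "distr unit_leb unit_leb (Tmap M) = unit_leb"
proof (rule measure_eqI)
  fix B assume "B \<in> sets (distr unit_leb unit_leb (Tmap M))"
  then have B: "B \<in> sets unit_leb" by simp
  have "Tmap M -` B \<inter> space unit_leb = {0..<M / M} \<inter> Tmap M -` B"
    using assms by auto
  then show "emeasure (distr unit_leb unit_leb (Tmap M)) B = emeasure unit_leb B"
    using measure_Tmap_preimage_initial[OF assms order.refl B] B assms
    by (simp add: emeasure_distr measurable_Tmap unit_leb.emeasure_eq_measure)
qed simp

lemma measure_Tmap_preimage_interval_approx:
  fixes M :: nat
  assumes M: "0 < M" and a: "0 \<le> a" "a \<le> 1" and B: "B \<in> sets unit_leb"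
  shows "\<bar>measure unit_leb ({0..<a} \<inter> Tmap M -` B) - a * measure unit_leb B\<bar> \<le> 1 / M"
proof (cases "a = 1")
  case True
  then have "{0..<a} = {0..<M / M}" using M by simp
  then show ?thesis
    using measure_Tmap_preimage_initial[OF M order.refl B] M True by simp
next
  case False
  define k where "k = nat \<lfloor>a * M\<rfloor>"
  have k: "k \<le> a * M" "a * M < k + 1"
    using a by (simp_all add: k_def) linarith
  have "a * M < M" using a False M by simp
  with k have "k < M" by linarith
  have interval: "k / M \<le> a" "a \<le> (k + 1) / M"
    using k M by (simp_all add: field_simps)
  define m where "m = measure unit_leb B"
  have m: "0 \<le> m" "m \<le> 1" by (simp_all add: m_def)
  let ?E = "\<lambda>b. {0..<b} \<inter> Tmap M -` B"
  have "k * m / M = measure unit_leb (?E (k / M))"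
    using measure_Tmap_preimage_initial[OF M _ B, of k] \<open>k < M\<close> by (simp add: m_def)
  also have "\<dots> \<le> measure unit_leb (?E a)"
    using interval a B by (intro unit_leb.finite_measure_mono sets_unit_leb_Int_Tmap_preimage)
      (auto simp: sets_unit_leb_iff)
  finally have lower: "k * m / M \<le> measure unit_leb (?E a)" .
  have "measure unit_leb (?E a) \<le> measure unit_leb (?E ((k + 1) / M))"
    using interval B \<open>k < M\<close> M
    by (intro unit_leb.finite_measure_mono sets_unit_leb_Int_Tmap_preimage)
      (auto simp: sets_unit_leb_iff divide_le_eq_1)
  also have "\<dots> = (k + 1) * m / M"
    using measure_Tmap_preimage_initial[OF M _ B, of "k + 1"] \<open>k < M\<close> by (simp add: m_def)
  finally have upper: "measure unit_leb (?E a) \<le> (k + 1) * m / M" .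
  have "k * m / M \<le> a * m" "a * m \<le> (k + 1) * m / M"
    using mult_right_mono[OF interval(1) m(1)] mult_right_mono[OF interval(2) m(1)] by simp_all
  moreover have "(k + 1) * m / M - k * m / M \<le> 1 / M"
    using m M by (simp add: field_simps)
  ultimately show ?thesis
    using lower upper unfolding m_def[symmetric] by linarith
qed

lemma sets_unit_leb_generated: "sets unit_leb = sigma_sets {0..<1} ((\<lambda>a. {0..<a}) ` {0..1})"
proof -
  have "sets unit_leb = (\<inter>) {0..<1} ` sets borel"
    unfolding unit_leb_def by (simp add: sets_restrict_space)
  also have "sets (borel :: real measure) = sigma_sets UNIV (range lessThan)"
    by (subst borel_Iio) simp
  also have "(\<inter>) {0..<1::real} ` sigma_sets UNIV (range lessThan)
      = sigma_sets {0..<1} ((\<inter>) {0..<1} ` range lessThan)"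
  proof (rule sigma_sets_Int)
    have "{0..<1::real} \<in> sets borel" by simp
    then show "{0..<1::real} \<in> sigma_sets UNIV (range lessThan)"
      by (subst (asm) borel_Iio) simp
  qed simp
  also have "(\<inter>) {0..<1::real} ` range lessThan = (\<lambda>a. {0..<a}) ` {0..1}"
  proof (intro equalityI subsetI)
    fix I assume "I \<in> (\<inter>) {0..<1::real} ` range lessThan"
    then obtain b where "I = {0..<1} \<inter> {..<b}" by auto
    then have "I = {0..<max 0 (min b 1)}" by auto
    then show "I \<in> (\<lambda>a. {0..<a}) ` {0..1}" by (rule image_eqI) auto
  next
    fix I assume "I \<in> (\<lambda>a. {0..<a::real}) ` {0..1}"
    then obtain a where "a \<le> 1" "I = {0..<a}" by auto
    then have "I = {0..<1} \<inter> {..<a}" by auto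
    then show "I \<in> (\<inter>) {0..<1::real} ` range lessThan" by (rule image_eqI) simp
  qed
  finally show ?thesis .
qed

lemma (in prob_space) tendsto_prob_Int_sigma_sets:
  assumes G: "Int_stable G" "G \<subseteq> Pow (space M)" "sets M = sigma_sets (space M) G" "space M \<in> G"
    and E: "\<And>n. E n \<in> events"
    and lim: "\<And>A. A \<in> G \<Longrightarrow> (\<lambda>n. prob (A \<inter> E n)) \<longlonglongrightarrow> prob A * c"
    and A: "A \<in> events"
  shows "(\<lambda>n. prob (A \<inter> E n)) \<longlonglongrightarrow> prob A * c"
proof -
  from A G(3) have "A \<in> sigma_sets (space M) G" by simp
  from G(1,2) this show ?thesis
  proof (induction rule: sigma_sets_induct_disjoint)
    case (basic A)
    then show ?case by (rule lim)
  next
    case empty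
    then show ?case by simp
  next
    case (compl A)
    have A: "A \<in> events" using compl(1) G(3) by simp
    have "(space M - A) \<inter> E n = (space M \<inter> E n) - (A \<inter> E n)" for n by auto
    then have "prob ((space M - A) \<inter> E n) = prob (space M \<inter> E n) - prob (A \<inter> E n)" for n
      using A E by (simp add: finite_measure_Diff sets.Int)
    moreover have "prob (space M - A) = 1 - prob A"
      using prob_compl[OF A] .
    ultimately show ?case
      using tendsto_diff[OF lim[OF G(4)] compl(2)] by (simp add: left_diff_distrib prob_space)
  next
    case (union A)
    have A: "A i \<in> events" for i
      using union(2) G(3) by auto
    have sums_A: "(\<lambda>i. prob (A i)) sums prob (\<Union>i. A i)"
      using A union(1) by (intro finite_measure_UNION) auto
    have "prob ((\<Union>i. A i) \<inter> E n) = (\<Sum>i. prob (A i \<inter> E n))" for n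
    proof -
      have "disjoint_family (\<lambda>i. A i \<inter> E n)"
        using union(1) unfolding disjoint_family_on_def by blast
      then have "(\<lambda>i. prob (A i \<inter> E n)) sums prob (\<Union>i. A i \<inter> E n)"
        using A E by (intro finite_measure_UNION) auto
      moreover have "(\<Union>i. A i \<inter> E n) = (\<Union>i. A i) \<inter> E n" by blast
      ultimately show ?thesis by (metis sums_unique)
    qed
    moreover have "(\<lambda>n. \<Sum>i. prob (A i \<inter> E n)) \<longlonglongrightarrow> (\<Sum>i. prob (A i) * c)"
    proof (rule tannerys_theorem[THEN conjunct2, THEN conjunct2])
      show "\<forall>\<^sub>F (i, n) in at_top \<times>\<^sub>F sequentially. norm (prob (A i \<inter> E n)) \<le> prob (A i)"
        using A E by (intro always_eventually) (auto intro!: finite_measure_mono)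
      show "summable (\<lambda>i. prob (A i))"
        using sums_A by (simp add: sums_iff)
    qed (use union(3) in simp_all)
    moreover have "(\<Sum>i. prob (A i) * c) = prob (\<Union>i. A i) * c"
      using sums_A by (metis sums_iff suminf_mult2)
    ultimately show ?case by simp
  qed
qed

lemma unit_leb_mixing_Tmap:
  fixes M :: "nat \<Rightarrow> nat"
  assumes M: "filterlim M at_top sequentially" and A: "A \<in> sets unit_leb" and B: "B \<in> sets unit_leb"
  shows "(\<lambda>n. measure unit_leb (A \<inter> Tmap (M n) -` B)) \<longlonglongrightarrow> measure unit_leb A * measure unit_leb B"
proof -
  let ?E = "\<lambda>n. Tmap (M n) -` B \<inter> {0..<1}"
  have "\<forall>\<^sub>F n in sequentially. 1 \<le> M n"
    using M filterlim_at_top by blast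
  then have M_pos: "\<forall>\<^sub>F n in sequentially. 0 < M n"
    by (rule eventually_mono) simp
  have "filterlim (\<lambda>n. real (M n)) at_top sequentially"
    by (rule filterlim_compose[OF filterlim_real_sequentially M])
  then have error_lim: "(\<lambda>n. 1 / real (M n)) \<longlonglongrightarrow> 0"
    by (intro tendsto_divide_0[OF tendsto_const] filterlim_at_top_imp_at_infinity)
  have interval: "(\<lambda>n. measure unit_leb ({0..<a} \<inter> ?E n))
      \<longlonglongrightarrow> measure unit_leb {0..<a} * measure unit_leb B"
    if "a \<in> {0..1}" for a :: real
  proof (rule LIM_zero_cancel, rule Lim_null_comparison[OF _ error_lim])
    have "{0..<a} \<inter> ?E n = {0..<a} \<inter> Tmap (M n) -` B" for n
      using that by auto
    moreover have "measure unit_leb {0..<a} = a"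
      using that by (simp add: measure_unit_leb sets_unit_leb_iff)
    ultimately have "norm (measure unit_leb ({0..<a} \<inter> ?E n)
        - measure unit_leb {0..<a} * measure unit_leb B) \<le> 1 / M n" if "0 < M n" for n
      using measure_Tmap_preimage_interval_approx[OF that _ _ B, of a] \<open>a \<in> {0..1}\<close> by simp
    with M_pos show "\<forall>\<^sub>F n in sequentially.
        norm (measure unit_leb ({0..<a} \<inter> ?E n)
          - measure unit_leb {0..<a} * measure unit_leb B) \<le> 1 / M n"
      by (auto elim: eventually_mono)
  qed
  have "(\<lambda>n. measure unit_leb (A \<inter> ?E n)) \<longlonglongrightarrow> measure unit_leb A * measure unit_leb B"
  proof (rule unit_leb.tendsto_prob_Int_sigma_sets[OF _ _ _ _ _ _ A])
    show "Int_stable ((\<lambda>a. {0..<a::real}) ` {0..1})"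
    proof (rule Int_stableI_image)
      fix a b :: real assume "a \<in> {0..1}" "b \<in> {0..1}"
      then show "\<exists>c\<in>{0..1}. {0..<a} \<inter> {0..<b} = {0..<c}"
        by (intro bexI[of _ "min a b"]) auto
    qed
    show "space unit_leb \<in> (\<lambda>a. {0..<a::real}) ` {0..1}" by auto
    show "?E n \<in> sets unit_leb" for n
      using measurable_sets[OF measurable_Tmap B] by simp
  qed (auto simp: sets_unit_leb_generated interval)
  moreover have "A \<inter> ?E n = A \<inter> Tmap (M n) -` B" for n
    using A by (auto simp: sets_unit_leb_iff)
  ultimately show ?thesis by simp
qed

lemma liminf_add_ennreal:
  fixes f g :: "nat \<Rightarrow> ennreal"
  shows "liminf f + liminf g \<le> liminf (\<lambda>n. f n + g n)"
proof -
  have liminf_enn2ereal: "liminf (\<lambda>n. enn2ereal (h n)) = enn2ereal (liminf h)"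
    for h :: "nat \<Rightarrow> ennreal"
    by (intro Liminf_compose_continuous_mono continuous_on_enn2ereal)
      (auto simp: mono_def less_eq_ennreal.rep_eq)
  have "liminf (\<lambda>n. enn2ereal (f n)) + liminf (\<lambda>n. enn2ereal (g n))
      \<le> liminf (\<lambda>n. enn2ereal (f n) + enn2ereal (g n))"
    by (intro Liminf_add_le) auto
  then show ?thesis
    by (simp add: liminf_enn2ereal less_eq_ennreal.rep_eq flip: plus_ennreal.rep_eq)
qed

lemma liminf_cmult_ennreal:
  fixes f :: "nat \<Rightarrow> ennreal"
  assumes "c < top"
  shows "liminf (\<lambda>n. c * f n) = c * liminf f"
  using assms
  by (intro Liminf_compose_continuous_mono ennreal_continuous_on_cmult continuous_on_id)
    (auto simp: mono_def mult_left_mono)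

lemma liminf_nn_integral_indicator_ge:
  assumes E: "\<And>n. E n \<in> sets M"
    and mixing: "\<And>A. A \<in> sets M \<Longrightarrow> (\<lambda>n. emeasure M (A \<inter> E n)) \<longlonglongrightarrow> c * emeasure M A"
    and u: "u \<in> borel_measurable M"
  shows "c * (\<integral>\<^sup>+x. u x \<partial>M) \<le> liminf (\<lambda>n. \<integral>\<^sup>+x. u x * indicator (E n) x \<partial>M)"
  using u
proof (induction rule: borel_measurable_induct)
  case (cong f g)
  have "(\<integral>\<^sup>+x. f x \<partial>M) = (\<integral>\<^sup>+x. g x \<partial>M)"
    and "(\<lambda>n. \<integral>\<^sup>+x. f x * indicator (E n) x \<partial>M) = (\<lambda>n. \<integral>\<^sup>+x. g x * indicator (E n) x \<partial>M)"
    using cong(3) by (auto intro!: nn_integral_cong)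
  with cong(4) show ?case by simp
next
  case (set A)
  then have "(\<lambda>n. \<integral>\<^sup>+x. indicator A x * indicator (E n) x \<partial>M) = (\<lambda>n. emeasure M (A \<inter> E n))"
    using E by (simp flip: indicator_inter_arith)
  with mixing[OF set] show ?case
    using set by (simp add: lim_imp_Liminf)
next
  case (mult u a)
  note [measurable] = E \<open>u \<in> borel_measurable M\<close>
  have "c * (\<integral>\<^sup>+x. a * u x \<partial>M) = a * (c * (\<integral>\<^sup>+x. u x \<partial>M))"
    by (simp add: nn_integral_cmult ac_simps)
  also have "\<dots> \<le> a * liminf (\<lambda>n. \<integral>\<^sup>+x. u x * indicator (E n) x \<partial>M)"
    using mult.IH by (rule mult_left_mono) simp
  also have "\<dots> = liminf (\<lambda>n. \<integral>\<^sup>+x. a * u x * indicator (E n) x \<partial>M)"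
    using \<open>a < top\<close> by (simp add: liminf_cmult_ennreal nn_integral_cmult mult.assoc)
  finally show ?case .
next
  case (add u v)
  note [measurable] = E \<open>u \<in> borel_measurable M\<close> \<open>v \<in> borel_measurable M\<close>
  have "c * (\<integral>\<^sup>+x. v x + u x \<partial>M) = c * (\<integral>\<^sup>+x. v x \<partial>M) + c * (\<integral>\<^sup>+x. u x \<partial>M)"
    by (simp add: nn_integral_add distrib_left)
  also have "\<dots> \<le> liminf (\<lambda>n. \<integral>\<^sup>+x. v x * indicator (E n) x \<partial>M)
      + liminf (\<lambda>n. \<integral>\<^sup>+x. u x * indicator (E n) x \<partial>M)"
    using add.IH by (intro add_mono)
  also have "\<dots> \<le> liminf (\<lambda>n. \<integral>\<^sup>+x. (v x + u x) * indicator (E n) x \<partial>M)"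
    by (rule liminf_add_ennreal[THEN order_trans]) (simp add: nn_integral_add distrib_right)
  finally show ?case .
next
  case (seq U)
  note [measurable] = E seq(1)
  have "c * (\<integral>\<^sup>+x. (SUP i. U i) x \<partial>M) = (SUP i. c * (\<integral>\<^sup>+x. U i x \<partial>M))"
    using \<open>incseq U\<close>
    by (simp add: image_image nn_integral_monotone_convergence_SUP SUP_mult_left_ennreal)
  also have "\<dots> \<le> (SUP i. liminf (\<lambda>n. \<integral>\<^sup>+x. U i x * indicator (E n) x \<partial>M))"
    using seq.IH by (rule SUP_mono')
  also have "\<dots> \<le> liminf (\<lambda>n. \<integral>\<^sup>+x. (SUP i. U i) x * indicator (E n) x \<partial>M)"
    by (intro SUP_least Liminf_mono always_eventually allI nn_integral_mono mult_right_mono)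
      (auto intro: SUP_upper)
  finally show ?case .
qed

lemma measure_eqI_prob_space_le:
  assumes "prob_space M" "prob_space N" "sets M = sets N"
    and le: "\<And>A. A \<in> sets M \<Longrightarrow> emeasure M A \<le> emeasure N A"
  shows "M = N"
proof (rule measure_eqI)
  interpret M: prob_space M by fact
  interpret N: prob_space N by fact
  have space: "space M = space N" using assms(3) by (rule sets_eq_imp_space_eq)
  fix A assume A: "A \<in> sets M"
  then have "space M - A \<in> sets M" by auto
  then have "measure M A \<le> measure N A" "measure M (space M - A) \<le> measure N (space M - A)"
    using A le by (simp_all add: M.emeasure_eq_measure N.emeasure_eq_measure)
  moreover have "measure M (space M - A) = 1 - measure M A"
    and "measure N (space M - A) = 1 - measure N A"
    using M.prob_compl[OF A] N.prob_compl[of A] A assms(3) space by simp_all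
  ultimately show "emeasure M A = emeasure N A"
    by (simp add: M.emeasure_eq_measure N.emeasure_eq_measure)
qed fact

lemma distr_Tmap_power:
  fixes N :: nat
  assumes sets: "sets \<mu> = sets unit_leb" and inv: "distr \<mu> \<mu> (Tmap N) = \<mu>"
  shows "distr \<mu> \<mu> (Tmap (N ^ n)) = \<mu>"
proof (induction n)
  case 0
  have "distr \<mu> \<mu> (Tmap 1) = distr \<mu> \<mu> (\<lambda>x. x)"
    by (rule distr_cong) (auto simp: Tmap_def frac_eq sets_eq_imp_space_eq[OF sets])
  then show ?case by simp
next
  case (Suc n)
  have meas: "Tmap c \<in> \<mu> \<rightarrow>\<^sub>M \<mu>" for c
    using measurable_Tmap by (simp add: measurable_cong_sets[OF sets sets])
  have "Tmap (N ^ Suc n) = Tmap (of_int (int (N ^ n))) \<circ> Tmap N"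
    using Tmap_of_int_comp[of "int (N ^ n)" N] by (simp add: mult.commute)
  then have "distr \<mu> \<mu> (Tmap (N ^ Suc n)) = distr (distr \<mu> \<mu> (Tmap N)) \<mu> (Tmap (N ^ n))"
    using meas by (simp add: distr_distr)
  with inv Suc.IH show ?case by simp
qed

theorem is_acip_Tmap_unique:
  fixes N :: nat
  assumes N: "2 \<le> N" and \<mu>: "is_acip (Tmap N) \<mu>"
  shows "\<mu> = unit_leb"
proof -
  from \<mu> have sets: "sets \<mu> = sets unit_leb" and prob: "prob_space \<mu>"
    and ac: "absolutely_continuous unit_leb \<mu>" and inv: "distr \<mu> \<mu> (Tmap N) = \<mu>"
    by (auto simp: is_acip_def)
  have space: "space \<mu> = {0..<1}"
    using sets_eq_imp_space_eq[OF sets] by simp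
  obtain h where h: "h \<in> borel_measurable unit_leb" and density: "density unit_leb h = \<mu>"
    using unit_leb.Radon_Nikodym[OF ac sets] by blast
  have emeasure_\<mu>: "emeasure \<mu> A = (\<integral>\<^sup>+x. h x * indicator A x \<partial>unit_leb)"
    if "A \<in> sets unit_leb" for A
    using that h by (simp add: emeasure_density flip: density)
  have "(\<integral>\<^sup>+x. h x \<partial>unit_leb) = emeasure \<mu> {0..<1}"
    by (simp add: emeasure_\<mu> sets_unit_leb_iff) (auto intro!: nn_integral_cong)
  then have h_integral: "(\<integral>\<^sup>+x. h x \<partial>unit_leb) = 1"
    using prob_space.emeasure_space_1[OF prob] space by simp
  have powers: "filterlim (\<lambda>n. N ^ n) at_top sequentially"
    using N by (intro filterlim_subseq strict_monoI power_strict_increasing) auto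
  have "emeasure unit_leb B \<le> emeasure \<mu> B" if B: "B \<in> sets unit_leb" for B
  proof -
    let ?E = "\<lambda>n. Tmap (N ^ n) -` B \<inter> {0..<1}"
    have E: "?E n \<in> sets unit_leb" for n
      using measurable_sets[OF measurable_Tmap B] by simp
    have "emeasure \<mu> B = emeasure (distr \<mu> \<mu> (Tmap (N ^ n))) B" for n
      using distr_Tmap_power[OF sets inv] by simp
    also have "\<dots> n = emeasure \<mu> (?E n)" for n
      using B sets space measurable_Tmap
      by (simp add: emeasure_distr measurable_cong_sets[OF sets sets])
    finally have "emeasure \<mu> B = liminf (\<lambda>n. \<integral>\<^sup>+x. h x * indicator (?E n) x \<partial>unit_leb)"
      using E by (simp add: emeasure_\<mu> Liminf_const)
    moreover have "(\<lambda>n. emeasure unit_leb (A \<inter> ?E n)) \<longlonglongrightarrow> emeasure unit_leb B * emeasure unit_leb A"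
      if A: "A \<in> sets unit_leb" for A
    proof -
      have "A \<inter> ?E n = A \<inter> Tmap (N ^ n) -` B" for n
        using A by (auto simp: sets_unit_leb_iff)
      with unit_leb_mixing_Tmap[OF powers A B] show ?thesis
        by (simp add: unit_leb.emeasure_eq_measure mult.commute flip: ennreal_mult'')
    qed
    ultimately show ?thesis
      using liminf_nn_integral_indicator_ge[OF E _ h] h_integral by simp
  qed
  then show ?thesis
    by (intro measure_eqI_prob_space_le[symmetric, OF unit_leb.prob_space_axioms prob])
      (simp_all add: sets)
qed

lemma is_acip_Tmap_unit_leb:
  fixes N :: nat
  assumes "0 < N"
  shows "is_acip (Tmap N) unit_leb"
  using assms unit_leb.prob_space_axioms
  by (simp add: is_acip_def measurable_Tmap distr_Tmap_unit_leb absolutely_continuous_def)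

lemma acip_Tmap_eq_unit_leb:
  fixes N :: nat
  assumes "2 \<le> N"
  shows "acip (Tmap N) = unit_leb"
  unfolding acip_def using assms
  by (intro the_equality is_acip_Tmap_unit_leb is_acip_Tmap_unique) auto

lemma is_acip_comp_distr:
  assumes R: "R \<in> unit_leb \<rightarrow>\<^sub>M unit_leb" "nonsingular R" and S: "S \<in> unit_leb \<rightarrow>\<^sub>M unit_leb"
    and \<nu>: "is_acip (S \<circ> R) \<nu>"
  shows "is_acip (R \<circ> S) (distr \<nu> unit_leb R)"
proof -
  let ?\<mu> = "distr \<nu> unit_leb R"
  from \<nu> have sets: "sets \<nu> = sets unit_leb" and prob: "prob_space \<nu>"
    and ac: "absolutely_continuous unit_leb \<nu>" and inv: "distr \<nu> \<nu> (S \<circ> R) = \<nu>"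
    by (auto simp: is_acip_def)
  have space: "space \<nu> = {0..<1}"
    using sets_eq_imp_space_eq[OF sets] by simp
  have meas: "f \<in> M \<rightarrow>\<^sub>M N"
    if "f \<in> unit_leb \<rightarrow>\<^sub>M unit_leb" "sets M = sets unit_leb" "sets N = sets unit_leb"
    for f and M N :: "real measure"
    using that measurable_cong_sets by blast
  have "absolutely_continuous unit_leb ?\<mu>"
    unfolding absolutely_continuous_def
  proof
    fix A assume A: "A \<in> null_sets unit_leb"
    then have "R -` A \<inter> space \<nu> \<in> null_sets \<nu>"
      using R(2) ac space by (auto simp: nonsingular_def absolutely_continuous_def)
    then show "A \<in> null_sets ?\<mu>"
      using A meas[OF R(1) sets] by (auto simp: null_sets_def emeasure_distr)
  qed
  moreover have "distr ?\<mu> ?\<mu> (R \<circ> S) = ?\<mu>"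
  proof -
    have "distr ?\<mu> ?\<mu> (R \<circ> S) = distr \<nu> ?\<mu> (R \<circ> (S \<circ> R))"
      using R S sets by (simp add: distr_distr meas measurable_comp comp_assoc)
    also have "\<dots> = distr (distr \<nu> \<nu> (S \<circ> R)) ?\<mu> R"
      using R S sets by (simp add: distr_distr meas measurable_comp)
    also have "\<dots> = ?\<mu>"
      unfolding inv by (rule distr_cong) simp_all
    finally show ?thesis .
  qed
  ultimately show ?thesis
    using R S sets prob
    by (simp add: is_acip_def prob_space.prob_space_distr meas measurable_comp)
qed

lemma acip_comp_swap:
  assumes R: "R \<in> unit_leb \<rightarrow>\<^sub>M unit_leb" "nonsingular R"
    and S: "S \<in> unit_leb \<rightarrow>\<^sub>M unit_leb" "nonsingular S"
    and \<nu>: "is_acip (S \<circ> R) \<nu>" and unique: "\<And>\<nu>'. is_acip (S \<circ> R) \<nu>' \<Longrightarrow> \<nu>' = \<nu>"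
  shows "acip (R \<circ> S) = distr \<nu> unit_leb R"
  unfolding acip_def
proof (rule the_equality)
  show "is_acip (R \<circ> S) (distr \<nu> unit_leb R)"
    using R S(1) \<nu> by (rule is_acip_comp_distr)
next
  fix \<mu> assume \<mu>: "is_acip (R \<circ> S) \<mu>"
  then have sets: "sets \<mu> = sets unit_leb" and inv: "distr \<mu> \<mu> (R \<circ> S) = \<mu>"
    by (auto simp: is_acip_def)
  have S_meas: "S \<in> \<mu> \<rightarrow>\<^sub>M unit_leb" and R_meas: "R \<in> unit_leb \<rightarrow>\<^sub>M \<mu>"
    using S(1) R(1) measurable_cong_sets[OF sets refl] measurable_cong_sets[OF refl sets] by auto
  have "distr \<mu> unit_leb S = \<nu>"
    using S \<mu> R(1) by (intro unique is_acip_comp_distr)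
  have "\<mu> = distr \<mu> \<mu> (R \<circ> S)" using inv by simp
  also have "\<dots> = distr (distr \<mu> unit_leb S) \<mu> R"
    using S_meas R_meas by (simp add: distr_distr)
  also have "\<dots> = distr \<nu> unit_leb R"
    unfolding \<open>distr \<mu> unit_leb S = \<nu>\<close> using sets by (intro distr_cong) simp_all
  finally show "\<mu> = distr \<nu> unit_leb R" .
qed

lemma mu_comp_of_Tmap_comp_eq:
  fixes a b :: nat
  assumes "0 < a" "2 \<le> b" "c \<noteq> 0" and comp: "Tmap a \<circ> Tmap c = Tmap b"
  shows "mu_comp a c = unit_leb" and "mu_comp c a = distr unit_leb unit_leb (Tmap c)"
proof -
  show "mu_comp a c = unit_leb"
    unfolding mu_comp_def comp using assms(2) by (rule acip_Tmap_eq_unit_leb)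
  show "mu_comp c a = distr unit_leb unit_leb (Tmap c)"
    unfolding mu_comp_def
  proof (rule acip_comp_swap)
    show "is_acip (Tmap a \<circ> Tmap c) unit_leb"
      unfolding comp using assms by (intro is_acip_Tmap_unit_leb) simp
    show "\<nu> = unit_leb" if "is_acip (Tmap a \<circ> Tmap c) \<nu>" for \<nu>
      using that assms unfolding comp by (intro is_acip_Tmap_unique[of b])
  qed (use assms in \<open>simp_all add: measurable_Tmap nonsingular_Tmap\<close>)
qed

theorem proposition3p1:
  fixes p q k l :: int
  assumes "p > q" and "q > 1" and "coprime p q"
    and "k \<ge> 1" and "l \<ge> 1"
  shows "mu_alt (real_of_int p / real_of_int q) (k * q) = mu_alt (real_of_int p / real_of_int q) (l * q)"
proof -
  define c where "c = real_of_int p / real_of_int q"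
  have "mu_comp (real_of_int (m * q)) c = unit_leb
      \<and> mu_comp c (real_of_int (m * q)) = distr unit_leb unit_leb (Tmap c)"
    if "m \<ge> 1" for m :: int
  proof -
    have "m * q \<ge> 1 * 2" "m * p \<ge> 1 * 2"
      using that assms by (intro mult_mono; simp)+
    moreover have "Tmap (of_int (m * q)) \<circ> Tmap c = Tmap (of_int (m * p))"
      unfolding Tmap_of_int_comp using \<open>q > 1\<close> by (simp add: c_def)
    ultimately show ?thesis
      using mu_comp_of_Tmap_comp_eq[of "nat (m * q)" "nat (m * p)" c] assms
      by (simp add: c_def)
  qed
  from this[OF \<open>k \<ge> 1\<close>] this[OF \<open>l \<ge> 1\<close>] show ?thesis
    unfolding mu_alt_def c_def[symmetric] by simp
qed

end
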